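(* For a $q$-spin system with interaction matrix $\mathbf{B}$ and $\Delta\geq3$, \[\max_{\boldsymbol{\alpha},\boldsymbol{\beta}\in\triangle_q}\Psi_1(\boldsymbol{\alpha},\boldsymbol{\beta})=\max_{\mathbf{r},\mathbf{c}}\Phi(\mathbf{r},\mathbf{c}).\]
   Context: $\mathbf{B}=(B_{ij})$ is a symmetric $q\times q$ nonnegative matrix (irreducible, standing assumption); $\triangle_q$ is the probability simplex in $\mathbb{R}^q$. $\Psi_1(\boldsymbol{\alpha},\boldsymbol{\beta})=\max_{\mathbf{x}}[(\Delta-1)(\sum_i\alpha_i\ln\alpha_i+\sum_j\beta_j\ln\beta_j)+\Delta\sum_{i,j}x_{ij}(\ln B_{ij}-\ln x_{ij})]$ over nonnegative $\mathbf{x}\in\mathbb{R}^{q\times q}$ with $\sum_jx_{ij}=\alpha_i$, $\sum_ix_{ij}=\beta_j$ (conventions $\ln0=-\infty$, $0\ln0=0$); it equals $\lim_n\frac1n\log\mathbf{E}[Z_G^{\boldsymbol{\alpha},\boldsymbol{\beta}}]$ for a random $\Delta$-regular bipartite graph formed as the union of $\Delta$ random perfect matchings on $n+n$ vertices. With $p=\Delta/(\Delta-1)$, for nonnegative nonzero $\mathbf{r},\mathbf{c}\in\mathbb{R}^q$, $\Phi$ is defined by $\exp(\Phi(\mathbf{r},\mathbf{c})/\Delta)=\frac{\mathbf{r}^{\intercal}\mathbf{B}\mathbf{c}}{\|\mathbf{r}\|_p\|\mathbf{c}\|_p}$. *)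

theory Defs
  imports "HOL-Analysis.Analysis"
begin

fun matpow :: "('q::finite \<Rightarrow> 'q \<Rightarrow> real) \<Rightarrow> nat \<Rightarrow> 'q \<Rightarrow> 'q \<Rightarrow> real" where
  "matpow B 0 = (\<lambda>i j. if i = j then 1 else 0)"
| "matpow B (Suc k) = (\<lambda>i j. \<Sum>l\<in>UNIV. matpow B k i l * B l j)"

definition irreducible_mat :: "('q::finite \<Rightarrow> 'q \<Rightarrow> real) \<Rightarrow> bool" where
  "irreducible_mat B \<longleftrightarrow> (\<forall>i j. \<exists>k. matpow B k i j > 0)"

definition prob_simplex :: "('q::finite \<Rightarrow> real) set" where
  "prob_simplex = {a. (\<forall>i. a i \<ge> 0) \<and> (\<Sum>i\<in>UNIV. a i) = 1}"

definition couplings :: "('q::finite \<Rightarrow> real) \<Rightarrow> ('q \<Rightarrow> real) \<Rightarrow> ('q \<Rightarrow> 'q \<Rightarrow> real) set" where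
  "couplings a b = {x. (\<forall>i j. x i j \<ge> 0) \<and> (\<forall>i. (\<Sum>j\<in>UNIV. x i j) = a i)
                        \<and> (\<forall>j. (\<Sum>i\<in>UNIV. x i j) = b j)}"

text \<open>Objective with conventions ln 0 = -infinity, 0 ln 0 = 0: a term x_ij ln B_ij with
  x_ij > 0 = B_ij gives -infinity; otherwise Isabelle's real ln (ln 0 = 0) gives the right value.\<close>
definition Psi1_obj :: "nat \<Rightarrow> ('q::finite \<Rightarrow> 'q \<Rightarrow> real) \<Rightarrow> ('q \<Rightarrow> real) \<Rightarrow> ('q \<Rightarrow> real)
                        \<Rightarrow> ('q \<Rightarrow> 'q \<Rightarrow> real) \<Rightarrow> ereal" where
  "Psi1_obj \<Delta> B a b x =
     (if \<exists>i j. x i j > 0 \<and> B i j = 0 then -\<infinity>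
      else ereal ((real \<Delta> - 1) * ((\<Sum>i\<in>UNIV. a i * ln (a i)) + (\<Sum>j\<in>UNIV. b j * ln (b j)))
                  + real \<Delta> * (\<Sum>i\<in>UNIV. \<Sum>j\<in>UNIV. x i j * (ln (B i j) - ln (x i j)))))"

definition Psi1 :: "nat \<Rightarrow> ('q::finite \<Rightarrow> 'q \<Rightarrow> real) \<Rightarrow> ('q \<Rightarrow> real) \<Rightarrow> ('q \<Rightarrow> real) \<Rightarrow> ereal" where
  "Psi1 \<Delta> B a b = (SUP x\<in>couplings a b. Psi1_obj \<Delta> B a b x)"

definition pnorm :: "real \<Rightarrow> ('q::finite \<Rightarrow> real) \<Rightarrow> real" where
  "pnorm p r = (\<Sum>i\<in>UNIV. \<bar>r i\<bar> powr p) powr (1 / p)"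

definition admissible_vec :: "('q::finite \<Rightarrow> real) \<Rightarrow> bool" where
  "admissible_vec r \<longleftrightarrow> (\<forall>i. r i \<ge> 0) \<and> r \<noteq> (\<lambda>_. 0)"

definition Phi :: "nat \<Rightarrow> ('q::finite \<Rightarrow> 'q \<Rightarrow> real) \<Rightarrow> ('q \<Rightarrow> real) \<Rightarrow> ('q \<Rightarrow> real) \<Rightarrow> ereal" where
  "Phi \<Delta> B r c =
     (let p = real \<Delta> / (real \<Delta> - 1);
          t = (\<Sum>i\<in>UNIV. \<Sum>j\<in>UNIV. r i * B i j * c j) / (pnorm p r * pnorm p c)
      in if t > 0 then ereal (real \<Delta> * ln t) else -\<infinity>)"

end

theory Submission
  imports Defs
begin

(* With p = Delta/(Delta-1) we have Delta ln r = (Delta-1) ln r^p, so for a coupling x of (alpha, beta)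
   and any weights r, c the objective of Psi1 splits as
     Delta * sum x_ij ln (r_i B_ij c_j / x_ij) + (Delta-1) * (KL(alpha || r^p) + KL(beta || c^p)).
   Taking r = alpha^(1/p), c = beta^(1/p) kills the relative entropies, and Gibbs' inequality bounds the
   first term by Delta ln (r^T B c) = Phi(r, c) because |r|_p = |c|_p = 1. Conversely, for p-normalised
   r, c the coupling proportional to r_i B_ij c_j makes the first term equal to Phi(r, c), and the
   relative entropies are nonnegative. Phi is scale invariant, so it attains its maximum on the compact
   set of pairs of probability vectors; the two inequalities then show that Psi1 attains the same value
   at the marginals of that coupling. *)

lemma sum_pos_if_pos_on_support:
  fixes x w :: "'a \<Rightarrow> real"
  assumes "finite A" and x_nonneg: "\<And>k. k \<in> A \<Longrightarrow> x k \<ge> 0" and w_nonneg: "\<And>k. k \<in> A \<Longrightarrow> w k \<ge> 0"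
    and x_sum: "(\<Sum>k\<in>A. x k) = 1" and w_pos: "\<And>k. k \<in> A \<Longrightarrow> x k > 0 \<Longrightarrow> w k > 0"
  shows "(\<Sum>k\<in>A. w k) > 0"
proof -
  have "sum x A \<noteq> 0" using x_sum by simp
  then obtain k where "k \<in> A" "x k \<noteq> 0"
    using sum.not_neutral_contains_not_neutral by blast
  moreover have "x k \<ge> 0" using x_nonneg \<open>k \<in> A\<close> by blast
  ultimately show ?thesis
    using \<open>finite A\<close> w_pos w_nonneg by (intro sum_pos2[of A k]) auto
qed

lemma gibbs_inequality:
  fixes x w :: "'a \<Rightarrow> real"
  assumes "finite A" and x_nonneg: "\<And>k. k \<in> A \<Longrightarrow> x k \<ge> 0" and w_nonneg: "\<And>k. k \<in> A \<Longrightarrow> w k \<ge> 0"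
    and x_sum: "(\<Sum>k\<in>A. x k) = 1" and w_pos: "\<And>k. k \<in> A \<Longrightarrow> x k > 0 \<Longrightarrow> w k > 0"
  shows "(\<Sum>k\<in>A. x k * ln (w k / x k)) \<le> ln (\<Sum>k\<in>A. w k)"
proof -
  define S where "S = (\<Sum>k\<in>A. w k)"
  have "S > 0"
    unfolding S_def using assms by (rule sum_pos_if_pos_on_support)
  have term_le: "x k * ln (w k / x k) - x k * ln S \<le> w k / S - x k" if "k \<in> A" for k
  proof (cases "x k = 0")
    case True
    thus ?thesis using w_nonneg[OF that] \<open>S > 0\<close> by simp
  next
    case False
    hence "x k > 0" using x_nonneg[OF that] by simp
    hence "w k > 0" using w_pos that by auto
    have "x k * ln (w k / x k) - x k * ln S = x k * ln (w k / (x k * S))"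
      using \<open>x k > 0\<close> \<open>w k > 0\<close> \<open>S > 0\<close> by (simp add: ln_div ln_mult algebra_simps)
    also have "\<dots> \<le> x k * (w k / (x k * S) - 1)"
      using \<open>x k > 0\<close> \<open>w k > 0\<close> \<open>S > 0\<close> by (intro mult_left_mono ln_le_minus_one) auto
    also have "\<dots> = w k / S - x k"
      using \<open>x k > 0\<close> by (simp add: field_simps)
    finally show ?thesis .
  qed
  have "(\<Sum>k\<in>A. x k * ln (w k / x k)) - ln S = (\<Sum>k\<in>A. x k * ln (w k / x k) - x k * ln S)"
    by (simp add: sum_subtractf sum_distrib_right[symmetric] x_sum)
  also have "\<dots> \<le> (\<Sum>k\<in>A. w k / S - x k)"
    using term_le by (intro sum_mono) auto
  also have "\<dots> = 0"
    using x_sum \<open>S > 0\<close> by (simp add: sum_subtractf sum_divide_distrib[symmetric] S_def)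
  finally show ?thesis by (simp add: S_def)
qed

lemma cross_entropy_le_entropy:
  fixes a s :: "'q::finite \<Rightarrow> real"
  assumes a: "a \<in> prob_simplex" and s_nonneg: "\<And>i. s i \<ge> 0" and s_sum: "(\<Sum>i\<in>UNIV. s i) = 1"
    and s_pos: "\<And>i. a i > 0 \<Longrightarrow> s i > 0"
  shows "(\<Sum>i\<in>UNIV. a i * ln (s i)) \<le> (\<Sum>i\<in>UNIV. a i * ln (a i))"
proof -
  have a_nonneg: "\<And>i. a i \<ge> 0" and a_sum: "(\<Sum>i\<in>UNIV. a i) = 1"
    using a by (auto simp: prob_simplex_def)
  have "a i * ln (s i / a i) = a i * ln (s i) - a i * ln (a i)" for i
  proof (cases "a i = 0")
    case False
    hence "a i > 0" using a_nonneg[of i] by simp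
    thus ?thesis using s_pos[of i] by (simp add: ln_div algebra_simps)
  qed simp
  moreover have "(\<Sum>i\<in>UNIV. a i * ln (s i / a i)) \<le> ln (\<Sum>i\<in>UNIV. s i)"
    using a_nonneg a_sum s_nonneg s_pos by (intro gibbs_inequality) auto
  ultimately show ?thesis
    using s_sum by (simp add: sum_subtractf)
qed

lemma gibbs_inequality_matrix:
  fixes x W :: "'a::finite \<Rightarrow> 'b::finite \<Rightarrow> real"
  assumes "\<And>i j. x i j \<ge> 0" and "\<And>i j. W i j \<ge> 0" and "(\<Sum>i\<in>UNIV. \<Sum>j\<in>UNIV. x i j) = 1"
    and "\<And>i j. x i j > 0 \<Longrightarrow> W i j > 0"
  shows "(\<Sum>i\<in>UNIV. \<Sum>j\<in>UNIV. x i j * ln (W i j / x i j)) \<le> ln (\<Sum>i\<in>UNIV. \<Sum>j\<in>UNIV. W i j)"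
    and "(\<Sum>i\<in>UNIV. \<Sum>j\<in>UNIV. W i j) > 0"
proof -
  have pairs: "(\<Sum>i\<in>UNIV. \<Sum>j\<in>UNIV. f i j) = (\<Sum>k\<in>UNIV. case_prod f k)" for f :: "'a \<Rightarrow> 'b \<Rightarrow> real"
    by (simp add: sum.cartesian_product)
  have x_sum: "(\<Sum>k\<in>UNIV. case_prod x k) = 1"
    using assms(3) by (simp add: pairs)
  have "(\<Sum>k\<in>UNIV. case_prod x k * ln (case_prod W k / case_prod x k)) \<le> ln (\<Sum>k\<in>UNIV. case_prod W k)"
    by (rule gibbs_inequality[where x = "case_prod x" and w = "case_prod W"])
      (use assms x_sum in \<open>auto split: prod.splits\<close>)
  moreover have "(\<Sum>k\<in>UNIV. case_prod W k) > 0"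
    by (rule sum_pos_if_pos_on_support[where x = "case_prod x" and w = "case_prod W"])
      (use assms x_sum in \<open>auto split: prod.splits\<close>)
  ultimately show "(\<Sum>i\<in>UNIV. \<Sum>j\<in>UNIV. x i j * ln (W i j / x i j)) \<le> ln (\<Sum>i\<in>UNIV. \<Sum>j\<in>UNIV. W i j)"
    and "(\<Sum>i\<in>UNIV. \<Sum>j\<in>UNIV. W i j) > 0"
    by (simp_all add: pairs split_def)
qed

lemma sum_mult_ln_div_proportional:
  fixes x W :: "'a::finite \<Rightarrow> 'b::finite \<Rightarrow> real"
  assumes "S > 0" and x_eq: "\<And>i j. x i j = W i j / S" and "(\<Sum>i\<in>UNIV. \<Sum>j\<in>UNIV. x i j) = 1"
  shows "(\<Sum>i\<in>UNIV. \<Sum>j\<in>UNIV. x i j * ln (W i j / x i j)) = ln S"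
proof -
  have "x i j * ln (W i j / x i j) = x i j * ln S" for i j
    using \<open>S > 0\<close> by (cases "x i j = 0") (auto simp: x_eq)
  hence "(\<Sum>i\<in>UNIV. \<Sum>j\<in>UNIV. x i j * ln (W i j / x i j)) = (\<Sum>i\<in>UNIV. \<Sum>j\<in>UNIV. x i j * ln S)"
    by (simp only:)
  also have "\<dots> = ln S"
    using assms(3) by (simp add: sum_distrib_right[symmetric])
  finally show ?thesis .
qed

lemma uniform_in_prob_simplex: "(\<lambda>_. 1 / real CARD('q::finite)) \<in> (prob_simplex :: ('q \<Rightarrow> real) set)"
  by (simp add: prob_simplex_def)

lemma prob_simplex_obtain_pos:
  assumes "a \<in> prob_simplex"
  obtains i where "a i > 0"
proof -
  have "sum a UNIV \<noteq> 0" and "\<And>i. a i \<ge> 0"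
    using assms by (auto simp: prob_simplex_def)
  obtain i where "a i \<noteq> 0"
    using sum.not_neutral_contains_not_neutral[OF \<open>sum a UNIV \<noteq> 0\<close>] by blast
  hence "a i > 0"
    using \<open>a i \<ge> 0\<close> by simp
  thus thesis by (rule that)
qed

lemma couplings_le_marginals:
  fixes x :: "'q::finite \<Rightarrow> 'q \<Rightarrow> real"
  assumes "x \<in> couplings a b"
  shows "x i j \<le> a i" and "x i j \<le> b j"
proof -
  have x_nonneg: "\<And>i j. x i j \<ge> 0" and rows: "\<And>i. (\<Sum>j\<in>UNIV. x i j) = a i"
    and cols: "\<And>j. (\<Sum>i\<in>UNIV. x i j) = b j"
    using assms by (auto simp: couplings_def)
  show "x i j \<le> a i"
    unfolding rows[symmetric] using x_nonneg by (intro member_le_sum) auto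
  show "x i j \<le> b j"
    unfolding cols[symmetric] using x_nonneg by (intro member_le_sum) auto
qed

lemma couplings_marginal_pos:
  fixes x :: "'q::finite \<Rightarrow> 'q \<Rightarrow> real"
  assumes "x \<in> couplings a b"
  shows "a i > 0 \<Longrightarrow> \<exists>j. x i j > 0" and "b j > 0 \<Longrightarrow> \<exists>i. x i j > 0"
proof -
  have x_nonneg: "\<And>i j. x i j \<ge> 0"
    using assms by (simp add: couplings_def)
  show "\<exists>j. x i j > 0" if "a i > 0"
  proof -
    have "(\<Sum>j\<in>UNIV. x i j) \<noteq> 0"
      using that assms by (simp add: couplings_def)
    then obtain j where "x i j \<noteq> 0"
      using sum.not_neutral_contains_not_neutral by blast
    thus ?thesis
      using x_nonneg[of i j] by (auto simp: less_le)
  qed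
  show "\<exists>i. x i j > 0" if "b j > 0"
  proof -
    have "(\<Sum>i\<in>UNIV. x i j) \<noteq> 0"
      using that assms by (simp add: couplings_def)
    then obtain i where "x i j \<noteq> 0"
      using sum.not_neutral_contains_not_neutral by blast
    thus ?thesis
      using x_nonneg[of i j] by (auto simp: less_le)
  qed
qed

lemma couplings_of_prob_matrix:
  fixes x :: "'q::finite \<Rightarrow> 'q \<Rightarrow> real"
  assumes x_nonneg: "\<And>i j. x i j \<ge> 0" and x_sum: "(\<Sum>i\<in>UNIV. \<Sum>j\<in>UNIV. x i j) = 1"
  defines "a \<equiv> \<lambda>i. \<Sum>j\<in>UNIV. x i j" and "b \<equiv> \<lambda>j. \<Sum>i\<in>UNIV. x i j"
  shows "a \<in> prob_simplex" and "b \<in> prob_simplex" and "x \<in> couplings a b"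
proof -
  show "a \<in> prob_simplex"
    using assms by (auto simp: prob_simplex_def a_def intro: sum_nonneg)
  show "b \<in> prob_simplex"
    using assms by (auto simp: prob_simplex_def b_def intro: sum_nonneg) (subst sum.swap, simp)
  show "x \<in> couplings a b"
    using x_nonneg by (simp add: couplings_def a_def b_def)
qed

definition hoelder_exp :: "nat \<Rightarrow> real" where
  "hoelder_exp \<Delta> = real \<Delta> / (real \<Delta> - 1)"

lemma hoelder_exp_pos: "\<Delta> \<ge> 2 \<Longrightarrow> hoelder_exp \<Delta> > 0"
  by (simp add: hoelder_exp_def)

lemma hoelder_exp_mult: "\<Delta> \<ge> 2 \<Longrightarrow> (real \<Delta> - 1) * hoelder_exp \<Delta> = real \<Delta>"
  by (simp add: hoelder_exp_def)

lemma powr_inverse_powr: "x \<ge> 0 \<Longrightarrow> p > 0 \<Longrightarrow> (x powr (1/p)) powr p = (x::real)"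
  by (simp add: powr_powr powr_one)

lemma pnorm_mult:
  fixes r :: "'q::finite \<Rightarrow> real"
  assumes "k > 0" "p > 0"
  shows "pnorm p (\<lambda>i. k * r i) = k * pnorm p r"
proof -
  have "(\<Sum>i\<in>UNIV. \<bar>k * r i\<bar> powr p) = k powr p * (\<Sum>i\<in>UNIV. \<bar>r i\<bar> powr p)"
    using assms by (simp add: abs_mult powr_mult sum_distrib_left)
  moreover have "(k powr p) powr (1/p) = k"
    using assms by (simp add: powr_powr)
  ultimately show ?thesis
    by (simp add: pnorm_def powr_mult)
qed

lemma pnorm_pos:
  fixes r :: "'q::finite \<Rightarrow> real"
  assumes "r \<noteq> (\<lambda>_. 0)"
  shows "pnorm p r > 0"
proof -
  obtain i where "r i \<noteq> 0" using assms by auto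
  hence "(\<Sum>i\<in>UNIV. \<bar>r i\<bar> powr p) > 0" by (intro sum_pos2) auto
  thus ?thesis unfolding pnorm_def by simp
qed

lemma pnorm_powr_inverse:
  fixes a :: "'q::finite \<Rightarrow> real"
  assumes "a \<in> prob_simplex" "p > 0"
  shows "pnorm p (\<lambda>i. a i powr (1/p)) = 1"
proof -
  have "(\<Sum>i\<in>UNIV. \<bar>a i powr (1/p)\<bar> powr p) = (\<Sum>i\<in>UNIV. a i)"
    using assms by (intro sum.cong) (auto simp: powr_powr prob_simplex_def)
  thus ?thesis using assms by (simp add: pnorm_def prob_simplex_def)
qed

lemma sum_powr_eq_1_if_pnorm_eq_1:
  fixes r :: "'q::finite \<Rightarrow> real"
  assumes "pnorm p r = 1" "p > 0" "\<And>i. r i \<ge> 0"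
  shows "(\<Sum>i\<in>UNIV. r i powr p) = 1"
proof -
  have "(\<Sum>i\<in>UNIV. r i powr p) \<ge> 0"
    by (intro sum_nonneg) simp
  hence "(\<Sum>i\<in>UNIV. r i powr p) = ((\<Sum>i\<in>UNIV. r i powr p) powr (1/p)) powr p"
    using \<open>p > 0\<close> by (simp add: powr_powr)
  also have "(\<Sum>i\<in>UNIV. r i powr p) powr (1/p) = 1"
    using assms by (simp add: pnorm_def)
  finally show ?thesis by simp
qed

lemma cross_entropy_powr_le_entropy:
  fixes a r :: "'q::finite \<Rightarrow> real"
  assumes "a \<in> prob_simplex" and "p > 0" and "\<And>i. r i \<ge> 0" and "pnorm p r = 1"
    and "\<And>i. a i > 0 \<Longrightarrow> r i > 0"
  shows "(\<Sum>i\<in>UNIV. a i * ln (r i powr p)) \<le> (\<Sum>i\<in>UNIV. a i * ln (a i))"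
  using sum_powr_eq_1_if_pnorm_eq_1[OF assms(4,2,3)] assms(5)
  by (intro cross_entropy_le_entropy[OF assms(1)]) (auto simp: less_le)

lemma admissible_powr_simplex:
  assumes "a \<in> prob_simplex"
  shows "admissible_vec (\<lambda>i. a i powr s)"
proof -
  obtain i where "a i > 0"
    using assms by (rule prob_simplex_obtain_pos)
  thus ?thesis
    by (auto simp: admissible_vec_def fun_eq_iff intro!: exI[of _ i])
qed

lemma admissible_vec_sum_pos:
  assumes "admissible_vec r"
  shows "(\<Sum>i\<in>UNIV. r i) > 0"
proof -
  obtain i where "r i \<noteq> 0"
    using assms by (auto simp: admissible_vec_def)
  thus ?thesis
    using assms by (intro sum_pos2[of UNIV i]) (auto simp: admissible_vec_def less_le)
qed

definition bilin_form :: "('q::finite \<Rightarrow> 'q \<Rightarrow> real) \<Rightarrow> ('q \<Rightarrow> real) \<Rightarrow> ('q \<Rightarrow> real) \<Rightarrow> real" where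
  "bilin_form B r c = (\<Sum>i\<in>UNIV. \<Sum>j\<in>UNIV. r i * B i j * c j)"

definition Phi_ratio :: "real \<Rightarrow> ('q::finite \<Rightarrow> 'q \<Rightarrow> real) \<Rightarrow> ('q \<Rightarrow> real) \<Rightarrow> ('q \<Rightarrow> real) \<Rightarrow> real" where
  "Phi_ratio p B r c = bilin_form B r c / (pnorm p r * pnorm p c)"

lemma Phi_eq_ratio:
  "Phi \<Delta> B r c = (let t = Phi_ratio (hoelder_exp \<Delta>) B r c in
     if t > 0 then ereal (real \<Delta> * ln t) else -\<infinity>)"
  by (simp add: Phi_def Phi_ratio_def bilin_form_def hoelder_exp_def Let_def)

lemma Phi_mono:
  assumes "Phi_ratio (hoelder_exp \<Delta>) B r' c' \<le> Phi_ratio (hoelder_exp \<Delta>) B r c"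
  shows "Phi \<Delta> B r' c' \<le> Phi \<Delta> B r c"
  using assms by (auto simp: Phi_eq_ratio Let_def intro: mult_left_mono)

lemma bilin_form_mult:
  "bilin_form B (\<lambda>i. k * r i) (\<lambda>j. l * c j) = k * l * bilin_form B r c"
  by (simp add: bilin_form_def sum_distrib_left algebra_simps)

lemma Phi_ratio_mult:
  assumes "k > 0" "l > 0" "p > 0"
  shows "Phi_ratio p B (\<lambda>i. k * r i) (\<lambda>j. l * c j) = Phi_ratio p B r c"
  using assms by (simp add: Phi_ratio_def bilin_form_mult pnorm_mult)

definition prob_vecs :: "(real^'n) set" where
  "prob_vecs = {u. (\<forall>i. 0 \<le> u $ i) \<and> (\<Sum>i\<in>UNIV. u $ i) = 1}"

lemma compact_prob_vecs: "compact prob_vecs"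
proof -
  have "closed prob_vecs"
    unfolding prob_vecs_def
    by (intro closed_Collect_conj closed_Collect_all closed_Collect_le closed_Collect_eq continuous_intros)
  moreover have "norm u \<le> 1" if "u \<in> prob_vecs" for u
    using norm_le_l1_cart[of u] that by (simp add: prob_vecs_def)
  hence "bounded prob_vecs"
    unfolding bounded_iff by blast
  ultimately show ?thesis
    by (simp add: compact_eq_bounded_closed)
qed

lemma prob_vecs_admissible:
  assumes "u \<in> prob_vecs"
  shows "admissible_vec (\<lambda>i. u $ i)"
proof -
  obtain i where "u $ i \<noteq> 0"
    using assms sum.not_neutral_contains_not_neutral[of "\<lambda>i. u $ i" UNIV] by (auto simp: prob_vecs_def)
  thus ?thesis
    using assms by (auto simp: admissible_vec_def prob_vecs_def fun_eq_iff)
qed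

lemma normalised_in_prob_vecs:
  assumes "admissible_vec r"
  shows "(\<chi> i. r i / (\<Sum>i\<in>UNIV. r i)) \<in> prob_vecs"
  using admissible_vec_sum_pos[OF assms] assms
  by (auto simp: prob_vecs_def admissible_vec_def sum_divide_distrib[symmetric])

lemma continuous_on_pnorm:
  assumes "p > 0" and "continuous_on S g"
  shows "continuous_on S (\<lambda>z. pnorm p (\<lambda>i. g z $ i))"
  unfolding pnorm_def using assms
  by (intro continuous_on_powr' continuous_intros continuous_on_sum) (auto intro!: sum_nonneg)

lemma Phi_ratio_attains_max:
  fixes B :: "'q::finite \<Rightarrow> 'q \<Rightarrow> real"
  assumes "p > 0"
  obtains r c where "admissible_vec r" "admissible_vec c"
    "\<And>r' c'. admissible_vec r' \<Longrightarrow> admissible_vec c' \<Longrightarrow> Phi_ratio p B r' c' \<le> Phi_ratio p B r c"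
proof -
  define P where "P = (prob_vecs :: (real^'q) set) \<times> (prob_vecs :: (real^'q) set)"
  define F where "F z = Phi_ratio p B (\<lambda>i. fst z $ i) (\<lambda>i. snd z $ i)" for z :: "(real^'q) \<times> (real^'q)"
  define normalise where "normalise r = (\<chi> i. r i / (\<Sum>i\<in>UNIV. r i))" for r :: "'q \<Rightarrow> real"
  have "continuous_on P F"
    unfolding F_def Phi_ratio_def bilin_form_def
  proof (intro continuous_on_divide continuous_on_mult continuous_on_pnorm[OF \<open>p > 0\<close>]
      continuous_intros continuous_on_sum)
    have pos: "pnorm p (\<lambda>i. u $ i) > 0" if "u \<in> prob_vecs" for u :: "real^'q"
      using prob_vecs_admissible[OF that] pnorm_pos unfolding admissible_vec_def by blast
    show "\<forall>z\<in>P. pnorm p (\<lambda>i. fst z $ i) * pnorm p (\<lambda>i. snd z $ i) \<noteq> 0"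
    proof
      fix z assume "z \<in> P"
      hence "pnorm p (\<lambda>i. fst z $ i) > 0" and "pnorm p (\<lambda>i. snd z $ i) > 0"
        by (auto simp: P_def intro!: pos)
      thus "pnorm p (\<lambda>i. fst z $ i) * pnorm p (\<lambda>i. snd z $ i) \<noteq> 0"
        by simp
    qed
  qed
  moreover have "compact P"
    unfolding P_def by (intro compact_Times compact_prob_vecs)
  moreover have "(normalise (\<lambda>_. 1), normalise (\<lambda>_. 1)) \<in> P"
    unfolding P_def normalise_def by (simp add: prob_vecs_def)
  ultimately obtain z where z: "z \<in> P" and z_max: "\<And>y. y \<in> P \<Longrightarrow> F y \<le> F z"
    using continuous_attains_sup[of P F] by blast
  show thesis
  proof (rule that)
    show "admissible_vec (\<lambda>i. fst z $ i)" "admissible_vec (\<lambda>i. snd z $ i)"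
      using z prob_vecs_admissible by (auto simp: P_def)
    fix r' c' :: "'q \<Rightarrow> real"
    assume r': "admissible_vec r'" and c': "admissible_vec c'"
    have "Phi_ratio p B r' c' = F (normalise r', normalise c')"
      using Phi_ratio_mult[of "1 / sum r' UNIV" "1 / sum c' UNIV" p B r' c']
        admissible_vec_sum_pos[OF r'] admissible_vec_sum_pos[OF c'] \<open>p > 0\<close>
      by (simp add: F_def normalise_def)
    also have "\<dots> \<le> F z"
      by (intro z_max) (simp add: P_def normalise_def normalised_in_prob_vecs r' c')
    finally show "Phi_ratio p B r' c' \<le> Phi_ratio p B (\<lambda>i. fst z $ i) (\<lambda>i. snd z $ i)"
      by (simp add: F_def)
  qed
qed

lemma Psi1_obj_coupling_eq:
  fixes B :: "'q::finite \<Rightarrow> 'q \<Rightarrow> real" and r c :: "'q \<Rightarrow> real"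
  assumes x: "x \<in> couplings a b" and \<Delta>: "\<Delta> \<ge> 2"
    and supp: "\<And>i j. x i j > 0 \<Longrightarrow> r i > 0 \<and> B i j > 0 \<and> c j > 0"
  defines "p \<equiv> hoelder_exp \<Delta>"
  shows "Psi1_obj \<Delta> B a b x =
    ereal (real \<Delta> * (\<Sum>i\<in>UNIV. \<Sum>j\<in>UNIV. x i j * ln (r i * B i j * c j / x i j))
      + (real \<Delta> - 1) * ((\<Sum>i\<in>UNIV. a i * ln (a i)) - (\<Sum>i\<in>UNIV. a i * ln (r i powr p))
                       + (\<Sum>j\<in>UNIV. b j * ln (b j)) - (\<Sum>j\<in>UNIV. b j * ln (c j powr p))))"
proof -
  have x_nonneg: "\<And>i j. x i j \<ge> 0" and rows: "\<And>i. (\<Sum>j\<in>UNIV. x i j) = a i"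
    and cols: "\<And>j. (\<Sum>i\<in>UNIV. x i j) = b j"
    using x by (auto simp: couplings_def)
  define Y where "Y = (\<Sum>i\<in>UNIV. \<Sum>j\<in>UNIV. x i j * (ln (B i j) - ln (x i j)))"
  define R where "R = (\<Sum>i\<in>UNIV. a i * ln (r i))"
  define C where "C = (\<Sum>j\<in>UNIV. b j * ln (c j))"
  have "x i j * ln (r i * B i j * c j / x i j) =
      x i j * (ln (B i j) - ln (x i j)) + x i j * ln (r i) + x i j * ln (c j)" for i j
  proof (cases "x i j = 0")
    case False
    hence "x i j > 0" using x_nonneg[of i j] by simp
    thus ?thesis using supp[of i j] by (simp add: ln_div ln_mult algebra_simps)
  qed simp
  hence "(\<Sum>i\<in>UNIV. \<Sum>j\<in>UNIV. x i j * ln (r i * B i j * c j / x i j)) =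
      Y + (\<Sum>i\<in>UNIV. \<Sum>j\<in>UNIV. x i j * ln (r i)) + (\<Sum>i\<in>UNIV. \<Sum>j\<in>UNIV. x i j * ln (c j))"
    by (simp add: Y_def sum.distrib)
  also have "(\<Sum>i\<in>UNIV. \<Sum>j\<in>UNIV. x i j * ln (r i)) = R"
    by (simp add: R_def sum_distrib_right[symmetric] rows)
  also have "(\<Sum>i\<in>UNIV. \<Sum>j\<in>UNIV. x i j * ln (c j)) = C"
    by (subst sum.swap) (simp add: C_def sum_distrib_right[symmetric] cols)
  finally have split: "(\<Sum>i\<in>UNIV. \<Sum>j\<in>UNIV. x i j * ln (r i * B i j * c j / x i j)) = Y + R + C" .
  have powr_sum: "(real \<Delta> - 1) * (\<Sum>i\<in>UNIV. w i * ln (v i powr p)) = real \<Delta> * (\<Sum>i\<in>UNIV. w i * ln (v i))"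
    for w v :: "'q \<Rightarrow> real"
  proof -
    have "(\<Sum>i\<in>UNIV. w i * ln (v i powr p)) = p * (\<Sum>i\<in>UNIV. w i * ln (v i))"
      by (simp add: sum_distrib_left mult.left_commute)
    thus ?thesis
      using hoelder_exp_mult[OF \<Delta>] by (simp add: p_def mult.assoc[symmetric])
  qed
  have "\<not> (\<exists>i j. x i j > 0 \<and> B i j = 0)"
    using supp by force
  hence "Psi1_obj \<Delta> B a b x = ereal ((real \<Delta> - 1) * ((\<Sum>i\<in>UNIV. a i * ln (a i)) + (\<Sum>j\<in>UNIV. b j * ln (b j)))
      + real \<Delta> * Y)"
    by (simp add: Psi1_obj_def Y_def)
  thus ?thesis
    unfolding split using powr_sum[of a r, folded R_def] powr_sum[of b c, folded C_def]
    by (simp add: algebra_simps)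
qed

lemma Psi1_obj_le_Phi_powr:
  fixes B :: "'q::finite \<Rightarrow> 'q \<Rightarrow> real"
  assumes B_nonneg: "\<And>i j. B i j \<ge> 0" and \<Delta>: "\<Delta> \<ge> 2"
    and a: "a \<in> prob_simplex" and b: "b \<in> prob_simplex" and x: "x \<in> couplings a b"
  defines "p \<equiv> hoelder_exp \<Delta>"
  shows "Psi1_obj \<Delta> B a b x \<le> Phi \<Delta> B (\<lambda>i. a i powr (1/p)) (\<lambda>j. b j powr (1/p))"
proof (cases "\<exists>i j. x i j > 0 \<and> B i j = 0")
  case True
  thus ?thesis by (simp add: Psi1_obj_def)
next
  case False
  define r where "r i = a i powr (1/p)" for i
  define c where "c j = b j powr (1/p)" for j
  define W where "W i j = r i * B i j * c j" for i j
  have "p > 0"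
    using \<Delta> by (simp add: p_def hoelder_exp_pos)
  have x_nonneg: "\<And>i j. x i j \<ge> 0" and rows: "\<And>i. (\<Sum>j\<in>UNIV. x i j) = a i"
    using x by (auto simp: couplings_def)
  have a_nonneg: "\<And>i. a i \<ge> 0" and b_nonneg: "\<And>j. b j \<ge> 0" and a_sum: "(\<Sum>i\<in>UNIV. a i) = 1"
    using a b by (auto simp: prob_simplex_def)
  have supp: "r i > 0 \<and> B i j > 0 \<and> c j > 0" if "x i j > 0" for i j
    using that False B_nonneg[of i j] couplings_le_marginals[OF x, of i j]
    by (auto simp: r_def c_def less_le)
  have W_nonneg: "W i j \<ge> 0" for i j
    using B_nonneg by (simp add: W_def r_def c_def)
  have x_sum: "(\<Sum>i\<in>UNIV. \<Sum>j\<in>UNIV. x i j) = 1"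
    using a_sum by (simp add: rows)
  define G where "G = (\<Sum>i\<in>UNIV. \<Sum>j\<in>UNIV. x i j * ln (W i j / x i j))"
  have obj: "Psi1_obj \<Delta> B a b x = ereal (real \<Delta> * G)"
    using Psi1_obj_coupling_eq[OF x \<Delta> supp] \<open>p > 0\<close> a_nonneg b_nonneg
    by (simp add: G_def W_def r_def c_def powr_inverse_powr p_def)
  have W_pos: "W i j > 0" if "x i j > 0" for i j
    using supp[OF that] by (simp add: W_def)
  have "G \<le> ln (\<Sum>i\<in>UNIV. \<Sum>j\<in>UNIV. W i j)" and "(\<Sum>i\<in>UNIV. \<Sum>j\<in>UNIV. W i j) > 0"
    unfolding G_def using gibbs_inequality_matrix[where x = x and W = W, OF x_nonneg W_nonneg x_sum W_pos] by auto
  moreover have "(\<Sum>i\<in>UNIV. \<Sum>j\<in>UNIV. W i j) = Phi_ratio p B r c"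
    using pnorm_powr_inverse[OF a \<open>p > 0\<close>] pnorm_powr_inverse[OF b \<open>p > 0\<close>]
    by (simp add: Phi_ratio_def bilin_form_def W_def r_def[abs_def] c_def[abs_def])
  ultimately show ?thesis
    using obj by (auto simp: Phi_eq_ratio p_def r_def[abs_def] c_def[abs_def] intro: mult_left_mono)
qed

lemma Psi1_le_Phi_powr:
  fixes B :: "'q::finite \<Rightarrow> 'q \<Rightarrow> real"
  assumes "\<And>i j. B i j \<ge> 0" and "\<Delta> \<ge> 2" and "a \<in> prob_simplex" and "b \<in> prob_simplex"
  defines "p \<equiv> hoelder_exp \<Delta>"
  shows "Psi1 \<Delta> B a b \<le> Phi \<Delta> B (\<lambda>i. a i powr (1/p)) (\<lambda>j. b j powr (1/p))"
  unfolding Psi1_def p_def using assms by (intro SUP_least Psi1_obj_le_Phi_powr)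

lemma Phi_normalised_le_Psi1:
  fixes B :: "'q::finite \<Rightarrow> 'q \<Rightarrow> real"
  assumes B_nonneg: "\<And>i j. B i j \<ge> 0" and \<Delta>: "\<Delta> \<ge> 2"
    and r_nonneg: "\<And>i. r i \<ge> 0" and c_nonneg: "\<And>j. c j \<ge> 0"
    and r_norm: "pnorm (hoelder_exp \<Delta>) r = 1" and c_norm: "pnorm (hoelder_exp \<Delta>) c = 1"
    and S_pos: "bilin_form B r c > 0"
  obtains a b where "a \<in> prob_simplex" "b \<in> prob_simplex"
    "ereal (real \<Delta> * ln (bilin_form B r c)) \<le> Psi1 \<Delta> B a b"
proof -
  define p where "p = hoelder_exp \<Delta>"
  define S where "S = bilin_form B r c"
  define x where "x i j = r i * B i j * c j / S" for i j
  define a where "a i = (\<Sum>j\<in>UNIV. x i j)" for i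
  define b where "b j = (\<Sum>i\<in>UNIV. x i j)" for j
  have "p > 0"
    using \<Delta> by (simp add: p_def hoelder_exp_pos)
  have x_nonneg: "x i j \<ge> 0" for i j
    using r_nonneg c_nonneg B_nonneg S_pos by (simp add: x_def S_def)
  have x_sum: "(\<Sum>i\<in>UNIV. \<Sum>j\<in>UNIV. x i j) = 1"
    using S_pos by (simp add: x_def S_def bilin_form_def sum_divide_distrib[symmetric])
  have a: "a \<in> prob_simplex" and b: "b \<in> prob_simplex" and x: "x \<in> couplings a b"
    using couplings_of_prob_matrix[OF x_nonneg x_sum] by (simp_all add: a_def[abs_def] b_def[abs_def])
  have supp: "r i > 0 \<and> B i j > 0 \<and> c j > 0" if "x i j > 0" for i j
  proof -
    have "r i * B i j * c j > 0"
      using that S_pos by (simp add: x_def S_def zero_less_divide_iff)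
    thus ?thesis
      using r_nonneg[of i] B_nonneg[of i j] c_nonneg[of j] by (auto simp: less_le)
  qed
  have gibbs_term: "(\<Sum>i\<in>UNIV. \<Sum>j\<in>UNIV. x i j * ln (r i * B i j * c j / x i j)) = ln S"
    using S_pos x_sum by (intro sum_mult_ln_div_proportional) (simp_all add: S_def x_def)
  have "(\<Sum>i\<in>UNIV. a i * ln (r i powr p)) \<le> (\<Sum>i\<in>UNIV. a i * ln (a i))"
    using couplings_marginal_pos(1)[OF x] supp
    by (intro cross_entropy_powr_le_entropy[OF a \<open>p > 0\<close> r_nonneg r_norm[folded p_def]]) blast
  moreover have "(\<Sum>j\<in>UNIV. b j * ln (c j powr p)) \<le> (\<Sum>j\<in>UNIV. b j * ln (b j))"
    using couplings_marginal_pos(2)[OF x] supp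
    by (intro cross_entropy_powr_le_entropy[OF b \<open>p > 0\<close> c_nonneg c_norm[folded p_def]]) blast
  ultimately have "real \<Delta> * ln S \<le> real \<Delta> * ln S + (real \<Delta> - 1) *
      ((\<Sum>i\<in>UNIV. a i * ln (a i)) - (\<Sum>i\<in>UNIV. a i * ln (r i powr p))
       + (\<Sum>j\<in>UNIV. b j * ln (b j)) - (\<Sum>j\<in>UNIV. b j * ln (c j powr p)))"
    using \<Delta> by (intro le_add_same_cancel1[THEN iffD2] mult_nonneg_nonneg) auto
  also have "\<dots> = Psi1_obj \<Delta> B a b x"
    using Psi1_obj_coupling_eq[OF x \<Delta> supp] by (simp only: gibbs_term p_def)
  finally have "ereal (real \<Delta> * ln S) \<le> Psi1_obj \<Delta> B a b x" by simp
  also have "\<dots> \<le> Psi1 \<Delta> B a b"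
    unfolding Psi1_def using x by (rule SUP_upper)
  finally show thesis
    using that a b by (simp add: S_def)
qed

lemma Phi_le_Psi1:
  fixes B :: "'q::finite \<Rightarrow> 'q \<Rightarrow> real"
  assumes B_nonneg: "\<And>i j. B i j \<ge> 0" and \<Delta>: "\<Delta> \<ge> 2"
    and r: "admissible_vec r" and c: "admissible_vec c"
  obtains a b where "a \<in> prob_simplex" "b \<in> prob_simplex" "Phi \<Delta> B r c \<le> Psi1 \<Delta> B a b"
proof (cases "Phi_ratio (hoelder_exp \<Delta>) B r c > 0")
  case False
  hence "Phi \<Delta> B r c = -\<infinity>"
    by (simp add: Phi_eq_ratio)
  thus thesis
    using that uniform_in_prob_simplex by simp
next
  case True
  define p where "p = hoelder_exp \<Delta>"
  define r' where "r' i = (1 / pnorm p r) * r i" for i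
  define c' where "c' j = (1 / pnorm p c) * c j" for j
  have "p > 0"
    using \<Delta> by (simp add: p_def hoelder_exp_pos)
  have "pnorm p r > 0" "pnorm p c > 0"
    using r c by (simp_all add: admissible_vec_def pnorm_pos)
  hence r'_norm: "pnorm p r' = 1" and c'_norm: "pnorm p c' = 1"
    using pnorm_mult[of "1 / pnorm p r" p r] pnorm_mult[of "1 / pnorm p c" p c] \<open>p > 0\<close>
    by (simp_all add: r'_def[abs_def] c'_def[abs_def])
  have "Phi_ratio p B r c = Phi_ratio p B r' c'"
    using Phi_ratio_mult[of "1 / pnorm p r" "1 / pnorm p c" p B r c]
      \<open>pnorm p r > 0\<close> \<open>pnorm p c > 0\<close> \<open>p > 0\<close>
    by (simp add: r'_def[abs_def] c'_def[abs_def])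
  also have "\<dots> = bilin_form B r' c'"
    by (simp add: Phi_ratio_def r'_norm c'_norm)
  finally have ratio: "Phi_ratio p B r c = bilin_form B r' c'" .
  have r'_nonneg: "\<And>i. r' i \<ge> 0" and c'_nonneg: "\<And>j. c' j \<ge> 0"
    using r c \<open>pnorm p r > 0\<close> \<open>pnorm p c > 0\<close> by (simp_all add: r'_def c'_def admissible_vec_def)
  have "bilin_form B r' c' > 0"
    using True ratio by (simp add: p_def)
  then obtain a b where "a \<in> prob_simplex" "b \<in> prob_simplex"
    "ereal (real \<Delta> * ln (bilin_form B r' c')) \<le> Psi1 \<Delta> B a b"
    by (rule Phi_normalised_le_Psi1[where B = B, OF B_nonneg \<Delta> r'_nonneg c'_nonneg
          r'_norm[unfolded p_def] c'_norm[unfolded p_def]])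
  thus thesis
    using that True ratio by (simp add: Phi_eq_ratio p_def)
qed

theorem lemma1:
  fixes B :: "'q::finite \<Rightarrow> 'q \<Rightarrow> real" and \<Delta> :: nat
  assumes "\<And>i j. B i j = B j i"
    and "\<And>i j. B i j \<ge> 0"
    and "irreducible_mat B"
    and "\<Delta> \<ge> 3"
  shows "\<exists>a b r c. a \<in> prob_simplex \<and> b \<in> prob_simplex \<and> admissible_vec r \<and> admissible_vec c
           \<and> (\<forall>a'\<in>prob_simplex. \<forall>b'\<in>prob_simplex. Psi1 \<Delta> B a' b' \<le> Psi1 \<Delta> B a b)
           \<and> (\<forall>r' c'. admissible_vec r' \<and> admissible_vec c' \<longrightarrow> Phi \<Delta> B r' c' \<le> Phi \<Delta> B r c)
           \<and> Psi1 \<Delta> B a b = Phi \<Delta> B r c"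
proof -
  have \<Delta>: "\<Delta> \<ge> 2"
    using \<open>\<Delta> \<ge> 3\<close> by simp
  define p where "p = hoelder_exp \<Delta>"
  obtain r c where r: "admissible_vec r" and c: "admissible_vec c"
    and ratio_max: "\<And>r' c'. admissible_vec r' \<Longrightarrow> admissible_vec c' \<Longrightarrow> Phi_ratio p B r' c' \<le> Phi_ratio p B r c"
    using Phi_ratio_attains_max[where B = B, OF hoelder_exp_pos[OF \<Delta>]] unfolding p_def by blast
  have Phi_max: "Phi \<Delta> B r' c' \<le> Phi \<Delta> B r c" if "admissible_vec r'" "admissible_vec c'" for r' c'
    using ratio_max[OF that] unfolding p_def by (rule Phi_mono)
  have Psi1_le: "Psi1 \<Delta> B a b \<le> Phi \<Delta> B r c" if "a \<in> prob_simplex" "b \<in> prob_simplex" for a b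
  proof -
    have "Psi1 \<Delta> B a b \<le> Phi \<Delta> B (\<lambda>i. a i powr (1/p)) (\<lambda>j. b j powr (1/p))"
      unfolding p_def by (rule Psi1_le_Phi_powr[where B = B, OF \<open>\<And>i j. B i j \<ge> 0\<close> \<Delta> that])
    also have "\<dots> \<le> Phi \<Delta> B r c"
      using that by (intro Phi_max admissible_powr_simplex)
    finally show ?thesis .
  qed
  obtain a b where a: "a \<in> prob_simplex" and b: "b \<in> prob_simplex" and Phi_le: "Phi \<Delta> B r c \<le> Psi1 \<Delta> B a b"
    by (rule Phi_le_Psi1[where B = B, OF \<open>\<And>i j. B i j \<ge> 0\<close> \<Delta> r c])
  have "Psi1 \<Delta> B a b = Phi \<Delta> B r c"
    using Psi1_le[OF a b] Phi_le by (rule antisym)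
  with a b r c Phi_max Psi1_le show ?thesis
    by (intro exI[of _ a] exI[of _ b] exI[of _ r] exI[of _ c]) auto
qed

end
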